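(* Let $n, C_1, C_2$ be positive constants with $C_2 > 1$, and let $f:[0,+\infty)\to[0,+\infty)$ be a monotonically increasing nonnegative function satisfying $$f(r) \le C_1 r^n f\!\left(\tfrac{r}{2}\right) \quad \text{for all } r \in [C_2,+\infty).$$ Then there is a positive constant $C_3$, depending only on $n, C_1, C_2$ and $f(C_2)$, such that $$f(r) \le C_3\, e^{2n(\log r)^2} \quad \text{for all } r \in [C_2,+\infty).$$ *)

theory Defs
  imports Complex_Main
begin

end

theory Submission
  imports Defs
begin

text \<open>In logarithmic coordinates \<open>x = ln r\<close> the hypothesis reads
  \<open>ln f(r) \<le> ln C\<^sub>1 + n x + ln f(r/2)\<close>, and halving \<open>r\<close> shifts \<open>x\<close> by \<open>ln 2\<close>.
  A quadratic \<open>E x = n x\<^sup>2 + \<beta> x + \<gamma>\<close> has increments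
  \<open>E x - E (x - ln 2) = 2 n x ln 2 + \<beta> ln 2 - n (ln 2)\<^sup>2\<close>, which dominate
  \<open>ln C\<^sub>1 + n x\<close> once \<open>\<beta>\<close> is large, because \<open>2 ln 2 \<ge> 1\<close>. With \<open>\<gamma>\<close> chosen to cover
  \<open>f\<close> on \<open>[C\<^sub>2, 2 C\<^sub>2)\<close>, induction over dyadic intervals gives \<open>f r \<le> exp (E (ln r))\<close>,
  and completing the square absorbs \<open>\<beta> x\<close> into \<open>n x\<^sup>2\<close> at the cost of a constant.\<close>

lemma ln_2_ge_half: "ln (2::real) \<ge> 1/2"
  using exp_half_le2 by (subst ln_ge_iff) auto

lemma mult_le_square_add:
  fixes b x n :: real
  assumes "n > 0"
  shows "b * x \<le> n * x^2 + b^2 / (4 * n)"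
proof -
  have "0 \<le> (2 * n * x - b)^2" by simp
  then show ?thesis using assms by (simp add: power2_eq_square field_simps)
qed

lemma doubling_induct:
  fixes a r :: real
  assumes "a > 0" and "a \<le> r"
    and base: "\<And>r. a \<le> r \<Longrightarrow> r < 2 * a \<Longrightarrow> P r"
    and step: "\<And>r. 2 * a \<le> r \<Longrightarrow> P (r / 2) \<Longrightarrow> P r"
  shows "P r"
proof -
  have "\<forall>r. a \<le> r \<longrightarrow> r < 2^k * a \<longrightarrow> P r" for k :: nat
  proof (induction k)
    case 0
    then show ?case by auto
  next
    case (Suc k)
    show ?case
    proof (intro allI impI)
      fix r assume r: "a \<le> r" "r < 2 ^ Suc k * a"
      show "P r"
      proof (cases "r < 2 * a")
        case True
        then show ?thesis using base r by blast
      next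
        case False
        then have "P (r / 2)" using Suc.IH r by auto
        then show ?thesis using step False by simp
      qed
    qed
  qed
  moreover obtain k :: nat where "r / a < 2^k"
    using real_arch_pow[of 2 "r / a"] by auto
  then have "r < 2^k * a" using \<open>a > 0\<close> by (simp add: field_simps)
  ultimately show ?thesis using \<open>a \<le> r\<close> by blast
qed

lemma halving_bound_extends:
  fixes f g h :: "real \<Rightarrow> real" and a r :: real
  assumes "a > 0" and "a \<le> r"
    and base: "\<And>r. a \<le> r \<Longrightarrow> r < 2 * a \<Longrightarrow> f r \<le> h r"
    and rec: "\<And>r. 2 * a \<le> r \<Longrightarrow> f r \<le> g r * f (r / 2)"
    and g_nonneg: "\<And>r. 2 * a \<le> r \<Longrightarrow> g r \<ge> 0"
    and h_step: "\<And>r. 2 * a \<le> r \<Longrightarrow> g r * h (r / 2) \<le> h r"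
  shows "f r \<le> h r"
  using \<open>a > 0\<close> \<open>a \<le> r\<close> base
proof (rule doubling_induct)
  fix r assume r: "2 * a \<le> r" and IH: "f (r / 2) \<le> h (r / 2)"
  have "f r \<le> g r * f (r / 2)" using rec r .
  also have "\<dots> \<le> g r * h (r / 2)" using IH g_nonneg[OF r] by (rule mult_left_mono)
  also have "\<dots> \<le> h r" using h_step r .
  finally show "f r \<le> h r" .
qed

lemma exp_log_quadratic_halving_step:
  fixes n c b \<gamma> r :: real
  assumes "n \<ge> 0" and "c > 0" and "ln c + n * (ln 2)^2 \<le> b * ln 2" and "r \<ge> 1"
  shows "c * r powr n * exp (n * (ln (r / 2))^2 + b * ln (r / 2) + \<gamma>)
           \<le> exp (n * (ln r)^2 + b * ln r + \<gamma>)"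
proof -
  define x where "x = ln r"
  have "x \<ge> 0" using \<open>r \<ge> 1\<close> unfolding x_def by simp
  then have "n * x \<le> 2 * n * ln 2 * x"
    using ln_2_ge_half \<open>n \<ge> 0\<close> mult_right_mono[of 1 "2 * ln 2" "n * x"] by (simp add: algebra_simps)
  then have key: "ln c + n * x + (n * (x - ln 2)^2 + b * (x - ln 2) + \<gamma>) \<le> n * x^2 + b * x + \<gamma>"
    using assms(3) by (simp add: power2_eq_square algebra_simps)
  have "ln (r / 2) = x - ln 2" "r powr n = exp (n * x)"
    using \<open>r \<ge> 1\<close> unfolding x_def by (simp_all add: ln_div powr_def mult.commute)
  then have "c * r powr n * exp (n * (ln (r / 2))^2 + b * ln (r / 2) + \<gamma>)
               = exp (ln c + n * x + (n * (x - ln 2)^2 + b * (x - ln 2) + \<gamma>))"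
    using \<open>c > 0\<close> by (simp only: exp_add exp_ln)
  also have "\<dots> \<le> exp (n * x^2 + b * x + \<gamma>)"
    using key by (simp only: exp_le_cancel_iff)
  finally show ?thesis unfolding x_def .
qed

lemma bounded_by_exp_log_quadratic:
  fixes f :: "real \<Rightarrow> real" and n C1 C2 b r :: real
  assumes "n > 0" and "C1 > 0" and "C2 > 1"
    and mono: "mono_on {0..} f" and nonneg: "\<And>r. r \<ge> 0 \<Longrightarrow> f r \<ge> 0"
    and rec: "\<And>r. r \<ge> C2 \<Longrightarrow> f r \<le> C1 * r powr n * f (r / 2)"
    and b: "ln C1 + n * (ln 2)^2 \<le> b * ln 2" "b \<ge> 0"
    and "r \<ge> C2"
  shows "f r \<le> exp (n * (ln r)^2 + b * ln r + ln (C1 * (2 * C2) powr n * f C2 + 1))"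
    (is "_ \<le> ?h r")
  using _ \<open>r \<ge> C2\<close>
proof (rule halving_bound_extends[where g = "\<lambda>r. C1 * r powr n"])
  show "C2 > 0" using \<open>C2 > 1\<close> by simp
next
  fix r assume r: "C2 \<le> r" "r < 2 * C2"
  have "f (r / 2) \<le> f C2" using r \<open>C2 > 1\<close> by (intro mono_onD[OF mono]) auto
  have "f r \<le> C1 * r powr n * f (r / 2)" using rec r(1) .
  also have "\<dots> \<le> C1 * r powr n * f C2"
    using \<open>f (r / 2) \<le> f C2\<close> \<open>C1 > 0\<close> by (intro mult_left_mono) auto
  also have "\<dots> \<le> C1 * (2 * C2) powr n * f C2"
    using r \<open>C2 > 1\<close> \<open>C1 > 0\<close> nonneg[of C2] \<open>n > 0\<close>
    by (intro mult_right_mono mult_left_mono powr_mono2) auto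
  also have "\<dots> < exp (ln (C1 * (2 * C2) powr n * f C2 + 1))"
    using \<open>C1 > 0\<close> nonneg[of C2] \<open>C2 > 1\<close> by (subst exp_ln) (auto intro!: add_nonneg_pos)
  also have "\<dots> \<le> ?h r"
    using r \<open>C2 > 1\<close> \<open>n > 0\<close> \<open>b \<ge> 0\<close> by simp
  finally show "f r \<le> ?h r" by simp
next
  fix r assume "2 * C2 \<le> r"
  then have "r \<ge> 1" using \<open>C2 > 1\<close> by simp
  show "f r \<le> C1 * r powr n * f (r / 2)" using rec \<open>2 * C2 \<le> r\<close> \<open>C2 > 1\<close> by simp
  show "C1 * r powr n \<ge> 0" using \<open>C1 > 0\<close> by simp
  show "C1 * r powr n * ?h (r / 2) \<le> ?h r"
    using exp_log_quadratic_halving_step[OF _ \<open>C1 > 0\<close> b(1) \<open>r \<ge> 1\<close>] \<open>n > 0\<close> by simp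
qed

theorem lemma2p1:
  fixes n C1 C2 M :: real
  assumes "n > 0" and "C1 > 0" and "C2 > 1"
  shows "\<exists>C3 > 0. \<forall>f :: real \<Rightarrow> real.
           (mono_on {0..} f \<and> (\<forall>r\<ge>0. f r \<ge> 0)
            \<and> (\<forall>r\<ge>C2. f r \<le> C1 * r powr n * f (r / 2))
            \<and> f C2 = M)
           \<longrightarrow> (\<forall>r\<ge>C2. f r \<le> C3 * exp (2 * n * (ln r)^2))"
proof -
  define b where "b = (\<bar>ln C1\<bar> + n * (ln 2)^2) / ln 2"
  define \<gamma> where "\<gamma> = ln (C1 * (2 * C2) powr n * M + 1)"
  have b: "ln C1 + n * (ln 2)^2 \<le> b * ln 2" "b \<ge> 0"
    using \<open>n > 0\<close> unfolding b_def by auto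
  show ?thesis
  proof (intro exI[of _ "exp (\<gamma> + b^2 / (4 * n))"] conjI allI impI)
    fix f :: "real \<Rightarrow> real" and r :: real
    assume f: "mono_on {0..} f \<and> (\<forall>r\<ge>0. f r \<ge> 0)
               \<and> (\<forall>r\<ge>C2. f r \<le> C1 * r powr n * f (r / 2)) \<and> f C2 = M"
      and "r \<ge> C2"
    then have "f r \<le> exp (n * (ln r)^2 + b * ln r + \<gamma>)"
      unfolding \<gamma>_def using bounded_by_exp_log_quadratic[OF assms _ _ _ b, of f r] by auto
    also have "\<dots> \<le> exp ((\<gamma> + b^2 / (4 * n)) + 2 * n * (ln r)^2)"
      using mult_le_square_add[OF \<open>n > 0\<close>, of b "ln r"] by simp
    finally show "f r \<le> exp (\<gamma> + b^2 / (4 * n)) * exp (2 * n * (ln r)^2)"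
      by (simp add: exp_add)
  qed simp
qed

end
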